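(* Let $R>0$, and let $M\subset\mathbb{R}^d$ be measurable with $\|x\|\le R$ for all $x\in M$. Let $\Phi:\mathbb{R}^d\to S^d$ be given by $\Phi(x_1,\dots,x_d)=(x_1,\dots,x_d,1)/\|(x_1,\dots,x_d,1)\|$. Then $V(\Phi(M))\ge(R+1)^{-(d+1)}\,V(M)$.
   Context: $S^d$ is the unit sphere in $\mathbb{R}^{d+1}$. $V(\Phi(M))$ denotes the $d$-dimensional surface measure on $S^d$, and $V(M)$ denotes the $d$-dimensional Lebesgue measure. *)

theory Defs
  imports "HOL-Analysis.Analysis"
begin

text \<open>Surface measure on the unit sphere of a Euclidean space 'b of dimension n+1,
  defined through the cone construction:
  sigma(A) = (n+1) * Lebesgue measure of {t x | 0 < t <= 1, x in A}.
  This is the standard (normalised as usual) d-dimensional surface measure on S^d.\<close>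

definition sphere_cone :: "'b::euclidean_space set \<Rightarrow> 'b set" where
  "sphere_cone A = {t *\<^sub>R x | t x. 0 < t \<and> t \<le> 1 \<and> x \<in> A}"

definition sphere_surface_measure :: "'b::euclidean_space set \<Rightarrow> real" where
  "sphere_surface_measure A =
     real DIM('b) * measure lebesgue (sphere_cone (A \<inter> sphere 0 1))"

definition Phi :: "'a::euclidean_space \<Rightarrow> 'a \<times> real" where
  "Phi x = (1 / norm (x, 1::real)) *\<^sub>R (x, 1)"

end

(*
  The part of the cone over Phi(M) inside the unit ball is {(s x, s) | x in M, s > 0, s |(x,1)| <= 1}.
  As |(x,1)| <= |x| + 1 <= R + 1 on M, it contains the truncated cone {(s x, s) | x in M, 0 < s <= 1/(R+1)}.
  Its slice at height s is the copy s M of measure s^d V(M), so by Fubini the truncated cone has measure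
  V(M) (R+1)^-(d+1) / (d+1); the factor d+1 in the cone definition of the surface measure cancels the
  denominator.
*)
theory Submission
  imports Defs
begin

text \<open>The cone \<open>{(s x, s) | x \<in> X, 0 < s \<le> a}\<close> over \<open>X \<times> {1}\<close>, cut off at height \<open>a\<close>.\<close>

definition truncated_cone :: "'a::euclidean_space set \<Rightarrow> real \<Rightarrow> ('a \<times> real) set" where
  "truncated_cone X a = {(y, s). 0 < s \<and> s \<le> a \<and> inverse s *\<^sub>R y \<in> X}"

lemma truncated_cone_mono: "X \<subseteq> Y \<Longrightarrow> a \<le> b \<Longrightarrow> truncated_cone X a \<subseteq> truncated_cone Y b"
  by (auto simp: truncated_cone_def)

lemma truncated_cone_Un: "truncated_cone (X \<union> Y) a = truncated_cone X a \<union> truncated_cone Y a"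
  by (auto simp: truncated_cone_def)

lemma truncated_cone_borel:
  assumes "X \<in> sets borel"
  shows "truncated_cone X a \<in> sets borel"
proof -
  have [measurable]: "fst \<in> borel_measurable borel" "snd \<in> borel_measurable borel"
    by (intro borel_measurable_continuous_onI continuous_intros)+
  have "truncated_cone X a = (\<lambda>p. inverse (snd p) *\<^sub>R fst p) -` X \<inter> {p. 0 < snd p \<and> snd p \<le> a}"
    by (auto simp: truncated_cone_def)
  also have "\<dots> \<in> sets borel"
    using assms by measurable
  finally show ?thesis .
qed

lemma slice_truncated_cone:
  "(\<lambda>y. (y, s)) -` truncated_cone X a = (if 0 < s \<and> s \<le> a then (*\<^sub>R) s ` X else {})"
proof -
  have "inverse s *\<^sub>R y \<in> X \<longleftrightarrow> y \<in> (*\<^sub>R) s ` X" if "s \<noteq> 0" for y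
    using that by (force simp: image_iff)
  then show ?thesis
    by (auto simp: truncated_cone_def)
qed

lemma nn_integral_power_Icc:
  assumes "0 \<le> a"
  shows "(\<integral>\<^sup>+s. ennreal (s ^ n) * indicator {0..a} s \<partial>lborel) = ennreal (a ^ Suc n / Suc n)"
proof (rule nn_integral_has_integral_lebesgue')
  have "((\<lambda>s. s ^ Suc n / Suc n) has_real_derivative s ^ n) (at s within {0..a})" for s :: real
    using DERIV_cdivide[OF DERIV_pow[of "Suc n" s], of "Suc n"] by (simp del: of_nat_Suc)
  then have "((\<lambda>s. s ^ n) has_integral (a ^ Suc n / Suc n - 0 ^ Suc n / Suc n)) {0..a}"
    using assms
    by (intro fundamental_theorem_of_calculus) (auto simp: has_real_derivative_iff_has_vector_derivative)
  then show "((\<lambda>s. s ^ n) has_integral (a ^ Suc n / Suc n)) {0..a}"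
    by simp
qed auto

lemma emeasure_lborel_slice_truncated_cone:
  fixes X :: "'a::euclidean_space set"
  assumes X: "X \<in> sets borel" and s: "0 < s" "s \<le> a"
  shows "emeasure lborel ((\<lambda>y. (y, s)) -` truncated_cone X a) = ennreal (s ^ DIM('a)) * emeasure lborel X"
proof -
  have "truncated_cone X a \<in> sets (lborel \<Otimes>\<^sub>M lborel)"
    using truncated_cone_borel[OF X] by (simp only: lborel_prod sets_lborel)
  then have "(\<lambda>y. (y, s)) -` truncated_cone X a \<in> sets lborel"
    by (rule sets_Pair2)
  then have "emeasure lborel ((\<lambda>y. (y, s)) -` truncated_cone X a) = emeasure lebesgue ((*\<^sub>R) s ` X)"
    using s by (simp add: slice_truncated_cone)
  also have "\<dots> = ennreal (s ^ DIM('a)) * emeasure lebesgue X"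
    using emeasure_lebesgue_affine[of s 0 X] s by simp
  finally show ?thesis
    using X by simp
qed

lemma emeasure_lborel_truncated_cone:
  fixes X :: "'a::euclidean_space set"
  assumes X: "X \<in> sets borel" and a: "0 \<le> a"
  shows "emeasure lborel (truncated_cone X a) = emeasure lborel X * ennreal (a ^ Suc DIM('a) / Suc DIM('a))"
proof -
  interpret lborel_pair: pair_sigma_finite "lborel :: 'a measure" "lborel :: real measure" ..
  have "truncated_cone X a \<in> sets (lborel \<Otimes>\<^sub>M lborel)"
    using truncated_cone_borel[OF X] by (simp only: lborel_prod sets_lborel)
  then have "emeasure lborel (truncated_cone X a)
      = (\<integral>\<^sup>+s. emeasure lborel ((\<lambda>y. (y, s)) -` truncated_cone X a) \<partial>lborel)"
    by (simp add: lborel_pair.emeasure_pair_measure_alt2 lborel_prod[symmetric])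
  also have "\<dots> = (\<integral>\<^sup>+s. emeasure lborel X * (ennreal (s ^ DIM('a)) * indicator {0..a} s) \<partial>lborel)"
  proof (rule nn_integral_cong)
    fix s :: real
    show "emeasure lborel ((\<lambda>y. (y, s)) -` truncated_cone X a)
        = emeasure lborel X * (ennreal (s ^ DIM('a)) * indicator {0..a} s)"
      using emeasure_lborel_slice_truncated_cone[OF X, of s a]
      by (cases "s = 0") (auto simp: slice_truncated_cone indicator_def mult.commute)
  qed
  also have "\<dots> = emeasure lborel X * ennreal (a ^ Suc DIM('a) / Suc DIM('a))"
    by (simp add: nn_integral_cmult nn_integral_power_Icc[OF a])
  finally show ?thesis .
qed

lemma
  fixes X :: "'a::euclidean_space set"
  assumes X: "X \<in> sets lebesgue" and a: "0 \<le> a"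
  shows sets_lebesgue_truncated_cone: "truncated_cone X a \<in> sets lebesgue"
    and emeasure_lebesgue_truncated_cone:
      "emeasure lebesgue (truncated_cone X a) = emeasure lebesgue X * ennreal (a ^ Suc DIM('a) / Suc DIM('a))"
proof -
  obtain S N N' where X_eq: "X = S \<union> N" and "N \<subseteq> N'" and N': "N' \<in> null_sets lborel"
    and S: "S \<in> sets lborel"
    using X by (rule sets_completionE)
  have N: "N \<in> null_sets lebesgue"
    using N' \<open>N \<subseteq> N'\<close> by (meson null_sets_completionI null_sets_completion_subset)
  have "truncated_cone N' a \<in> null_sets lborel"
    using N' emeasure_lborel_truncated_cone[of N' a] a truncated_cone_borel[of N' a]
    by (simp add: null_sets_def)
  then have cone_N: "truncated_cone N a \<in> null_sets lebesgue"
    using truncated_cone_mono[OF \<open>N \<subseteq> N'\<close> order_refl]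
    by (meson null_sets_completionI null_sets_completion_subset)
  have cone_S: "truncated_cone S a \<in> sets lborel"
    using S truncated_cone_borel by simp
  then show "truncated_cone X a \<in> sets lebesgue"
    using cone_N by (auto simp: X_eq truncated_cone_Un)
  have "emeasure lebesgue (truncated_cone X a) = emeasure lborel (truncated_cone S a)"
    using cone_S cone_N by (simp add: X_eq truncated_cone_Un emeasure_Un_null_set)
  also have "\<dots> = emeasure lborel S * ennreal (a ^ Suc DIM('a) / Suc DIM('a))"
    using S a by (simp add: emeasure_lborel_truncated_cone)
  also have "emeasure lborel S = emeasure lebesgue X"
    using S N by (simp add: X_eq emeasure_Un_null_set)
  finally show "emeasure lebesgue (truncated_cone X a) = emeasure lebesgue X * ennreal (a ^ Suc DIM('a) / Suc DIM('a))" .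
qed

lemma measure_lebesgue_truncated_cone:
  fixes X :: "'a::euclidean_space set"
  assumes "X \<in> sets lebesgue" and "0 \<le> a"
  shows "measure lebesgue (truncated_cone X a) = measure lebesgue X * (a ^ Suc DIM('a) / Suc DIM('a))"
  using assms by (simp add: measure_def emeasure_lebesgue_truncated_cone enn2real_mult)

lemma truncated_cone_subset_cball:
  assumes R: "0 \<le> R" and X: "\<And>x. x \<in> X \<Longrightarrow> norm x \<le> R"
  shows "truncated_cone X (1 / (R + 1)) \<subseteq> cball 0 1"
proof
  fix p assume "p \<in> truncated_cone X (1 / (R + 1))"
  then obtain y s where p: "p = (y, s)" and s: "0 < s" "s \<le> 1 / (R + 1)" and y: "inverse s *\<^sub>R y \<in> X"
    by (auto simp: truncated_cone_def)
  have "p = s *\<^sub>R (inverse s *\<^sub>R y, 1)"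
    using s by (simp add: p)
  then have "norm p = s * norm (inverse s *\<^sub>R y, 1::real)"
    using s by (metis norm_scaleR abs_of_pos)
  also have "\<dots> \<le> s * (R + 1)"
    using s X[OF y] norm_Pair_le[of "inverse s *\<^sub>R y" "1::real"] by (intro mult_left_mono) auto
  also have "\<dots> \<le> 1"
    using s R by (simp add: field_simps)
  finally show "p \<in> cball 0 1"
    by simp
qed

lemma norm_Pair_one_pos: "0 < norm (x, 1::real)"
  by (simp add: zero_prod_def)

lemma norm_Phi: "norm (Phi x) = 1"
  using norm_Pair_one_pos[of x] unfolding Phi_def norm_scaleR by simp

lemma sphere_cone_Phi_image: "sphere_cone (Phi ` M \<inter> sphere 0 1) = truncated_cone M 1 \<inter> cball 0 1"
proof (intro equalityI subsetI)
  fix p assume "p \<in> sphere_cone (Phi ` M \<inter> sphere 0 1)"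
  then obtain t x where t: "0 < t" "t \<le> 1" and x: "x \<in> M" and p: "p = t *\<^sub>R Phi x"
    unfolding sphere_cone_def by blast
  define s where "s = t / norm (x, 1::real)"
  have s: "0 < s"
    using t norm_Pair_one_pos[of x] by (simp add: s_def)
  have p_eq: "p = (s *\<^sub>R x, s)"
    by (simp add: p s_def Phi_def)
  have "norm p = t"
    using t by (simp add: p norm_Phi)
  with s t x show "p \<in> truncated_cone M 1 \<inter> cball 0 1"
    using norm_snd_le[of s "s *\<^sub>R x"] by (auto simp: truncated_cone_def p_eq)
next
  fix p assume "p \<in> truncated_cone M 1 \<inter> cball 0 1"
  then obtain y s where p: "p = (y, s)" and s: "0 < s" and y: "inverse s *\<^sub>R y \<in> M" and "norm p \<le> 1"
    by (auto simp: truncated_cone_def)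
  define x where "x = inverse s *\<^sub>R y"
  have x1: "(x, 1) = inverse s *\<^sub>R p"
    using s by (simp add: p x_def)
  then have "norm (x, 1::real) = norm p / s"
    using s by (simp add: field_simps)
  then have "p = norm p *\<^sub>R Phi x"
    using s norm_Pair_one_pos[of x] by (simp add: Phi_def x1)
  moreover have "0 < norm p"
    using s by (simp add: p zero_prod_def)
  ultimately show "p \<in> sphere_cone (Phi ` M \<inter> sphere 0 1)"
    using y \<open>norm p \<le> 1\<close> norm_Phi[of x] unfolding sphere_cone_def x_def by fastforce
qed

theorem lemma3p7:
  fixes M :: "'a::euclidean_space set" and R :: real
  assumes "R > 0"
    and "M \<in> sets lebesgue"
    and "\<And>x. x \<in> M \<Longrightarrow> norm x \<le> R"
  shows "sphere_surface_measure (Phi ` M)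
           \<ge> (R + 1) powi (- int (DIM('a) + 1)) * measure lebesgue M"
proof -
  define a where "a = 1 / (R + 1)"
  have a: "0 \<le> a" "a \<le> 1"
    using \<open>R > 0\<close> by (auto simp: a_def)
  let ?C = "truncated_cone M 1 \<inter> cball 0 1"
  have "?C \<in> lmeasurable"
    using sets_lebesgue_truncated_cone[OF assms(2), of 1]
    by (subst Int_commute) (intro fmeasurable_Int_fmeasurable lmeasurable_cball, auto)
  moreover have "truncated_cone M a \<subseteq> ?C"
    using truncated_cone_mono[of M M a 1] truncated_cone_subset_cball[of R M] assms(1,3) a
    by (auto simp: a_def)
  ultimately have "measure lebesgue (truncated_cone M a) \<le> measure lebesgue ?C"
    using sets_lebesgue_truncated_cone[OF assms(2) a(1)] by (intro measure_mono_fmeasurable)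
  then have "a ^ Suc DIM('a) * measure lebesgue M \<le> Suc DIM('a) * measure lebesgue ?C"
    using measure_lebesgue_truncated_cone[OF assms(2) a(1)] by (simp add: field_simps)
  moreover have "sphere_surface_measure (Phi ` M) = Suc DIM('a) * measure lebesgue ?C"
    by (simp add: sphere_surface_measure_def sphere_cone_Phi_image)
  moreover have "(R + 1) powi (- int (DIM('a) + 1)) = a ^ Suc DIM('a)"
    by (simp only: power_int_minus power_int_of_nat) (simp add: a_def power_one_over inverse_eq_divide)
  ultimately show ?thesis
    by simp
qed

end
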